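(* Let $X$ be a real Hausdorff locally convex topological vector space, let $f:X\to\overline{\mathbb R}$ be proper and let $U\subseteq\operatorname{dom} f$ be dense in $\operatorname{dom} f$. (a) $\overline{f_U}$ is lower semicontinuous, $U$ is graphically dense in $\operatorname{dom}\overline{f_U}$ with respect to $\overline{f_U}$, and $\inf_{x\in U}f(x)=\inf_{x\in X}\overline{f_U}(x)$. (b) If $f$ is lower semicontinuous on $U$, then $f(u)=\overline{f_U}(u)$ for all $u\in U$. If moreover $f$ is lower semicontinuous on $X$, then $\operatorname{dom}\overline{f_U}\subseteq\operatorname{dom} f$ and $\overline{f_U}(x)\ge f(x)$ for all $x\in X$; furthermore, in this case $\overline{f_U}=f$ on $X$ if and only if $U$ is graphically dense in $\operatorname{dom} f$ with respect to $f$. (c) If $\operatorname{dom} f$ is convex, $U$ is self-segment-dense in $\operatorname{dom} f$ and $f$ is convex on $U$, then $\overline{f_U}$ is convex and $\operatorname{epi} f_U$ is self-segment-dense in $\operatorname{epi}\overline{f_U}$.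
   Context: $\overline{\mathbb R}=\mathbb R\cup\{\pm\infty\}$; $\operatorname{dom} f=\{x:f(x)<+\infty\}$; $\operatorname{epi} f=\{(x,r)\in X\times\mathbb R:f(x)\le r\}$; $f$ is proper if $\operatorname{dom} f\ne\emptyset$ and $f>-\infty$ everywhere. For $U\subseteq\operatorname{dom} f$: $\operatorname{epi} f_U=\{(u,r)\in U\times\mathbb R: f(u)\le r\}$ and $\overline{f_U}:X\to\overline{\mathbb R}$ is the function whose epigraph is $\operatorname{cl}(\operatorname{epi} f_U)$ (closure in $X\times\mathbb R$), i.e. $\overline{f_U}(x)=\inf\{r:(x,r)\in\operatorname{cl}(\operatorname{epi} f_U)\}$ with $\inf\emptyset=+\infty$. Lower semicontinuity at $x$: for every net $x_i\to x$, $\liminf f(x_i)\ge f(x)$; "lower semicontinuous on $U$" means lower semicontinuous at each point of $U$ (with respect to nets in $U$). Given a function $g$ and $U\subseteq\operatorname{dom} g$, $U$ is graphically dense in $\operatorname{dom} g$ (w.r.t. $g$) if for every $x\in\operatorname{dom} g$ there is a net $(u_i)\subseteq U$ with $u_i\to x$ and $g(u_i)\to g(x)$. $f$ is convex on $U$ if $f((1-t)u+tv)\le(1-t)f(u)+tf(v)$ whenever $u,v\in U$, $t\in[0,1]$ and $(1-t)u+tv\in U$ ($U$ need not be convex). Convexity of $\overline{\mathbb R}$-valued functions uses the conventions $(+\infty)+(-\infty)=+\infty$, $0\cdot(+\infty)=+\infty$, $0\cdot(-\infty)=0$. $[x,y]=\{x+t(y-x):t\in[0,1]\}$. Self-segment-dense: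 for convex $V$ and $U\subseteq V$, $U$ is self-segment-dense in $V$ if $V\subseteq\operatorname{cl}U$ and for all $x,y\in U$, $[x,y]\cap U$ is dense in $[x,y]$. *)

theory Defs
  imports "HOL-Analysis.Analysis"
begin

definition lctvs :: "'a::{real_vector,t2_space} itself \<Rightarrow> bool" where
  "lctvs (T::'a itself) \<longleftrightarrow>
     continuous_on UNIV (\<lambda>(x::'a, y::'a). x + y)
   \<and> continuous_on UNIV (\<lambda>(c::real, x::'a). scaleR c x)
   \<and> (\<forall>W::'a set. open W \<and> 0 \<in> W \<longrightarrow> (\<exists>V. open V \<and> convex V \<and> 0 \<in> V \<and> V \<subseteq> W))"

definition edom :: "('a \<Rightarrow> ereal) \<Rightarrow> 'a set" where
  "edom f = {x. f x < \<infinity>}"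

definition epi :: "('a \<Rightarrow> ereal) \<Rightarrow> ('a \<times> real) set" where
  "epi f = {(x, r). f x \<le> ereal r}"

definition proper :: "('a \<Rightarrow> ereal) \<Rightarrow> bool" where
  "proper f \<longleftrightarrow> edom f \<noteq> {} \<and> (\<forall>x. f x > -\<infinity>)"

definition epi_on :: "('a \<Rightarrow> ereal) \<Rightarrow> 'a set \<Rightarrow> ('a \<times> real) set" where
  "epi_on f U = {(u, r). u \<in> U \<and> f u \<le> ereal r}"

text \<open>The closure function f_U bar: its epigraph is the closure of epi f_U.\<close>
definition fbar :: "('a::topological_space \<Rightarrow> ereal) \<Rightarrow> 'a set \<Rightarrow> 'a \<Rightarrow> ereal" where
  "fbar f U x = Inf {ereal r | r. (x, r) \<in> closure (epi_on f U)}"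

text \<open>Nets are represented by (proper) filters: a net (x_i) in S converging to x
  corresponds to its eventuality filter F, with F \<noteq> bot, F \<le> nhds x, eventually x_i \<in> S.\<close>
definition lsc_at_within :: "('a::topological_space \<Rightarrow> ereal) \<Rightarrow> 'a set \<Rightarrow> 'a \<Rightarrow> bool" where
  "lsc_at_within f S x \<longleftrightarrow>
     (\<forall>F. F \<noteq> bot \<and> F \<le> nhds x \<and> eventually (\<lambda>y. y \<in> S) F \<longrightarrow> f x \<le> Liminf F f)"

definition lsc_on :: "'a set \<Rightarrow> ('a::topological_space \<Rightarrow> ereal) \<Rightarrow> bool" where
  "lsc_on S f \<longleftrightarrow> (\<forall>x\<in>S. lsc_at_within f S x)"

definition graph_dense :: "('a::topological_space \<Rightarrow> ereal) \<Rightarrow> 'a set \<Rightarrow> bool" where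
  "graph_dense g U \<longleftrightarrow> U \<subseteq> edom g \<and>
     (\<forall>x\<in>edom g. \<exists>F. F \<noteq> bot \<and> F \<le> nhds x \<and> eventually (\<lambda>y. y \<in> U) F \<and> (g \<longlongrightarrow> g x) F)"

definition escale :: "real \<Rightarrow> ereal \<Rightarrow> ereal" where
  "escale t a = (if t = 0 then (if a = \<infinity> then \<infinity> else 0) else ereal t * a)"

text \<open>Convexity on a (not necessarily convex) set U; ereal addition already has
  (+inf) + (-inf) = +inf.\<close>
definition convex_on_set :: "'a::real_vector set \<Rightarrow> ('a \<Rightarrow> ereal) \<Rightarrow> bool" where
  "convex_on_set U f \<longleftrightarrow> (\<forall>u\<in>U. \<forall>v\<in>U. \<forall>t::real. 0 \<le> t \<and> t \<le> 1 \<and> (1 - t) *\<^sub>R u + t *\<^sub>R v \<in> U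
      \<longrightarrow> f ((1 - t) *\<^sub>R u + t *\<^sub>R v) \<le> escale (1 - t) (f u) + escale t (f v))"

definition self_segment_dense :: "'a::{real_vector,topological_space} set \<Rightarrow> 'a set \<Rightarrow> bool" where
  "self_segment_dense U V \<longleftrightarrow> convex V \<and> U \<subseteq> V \<and> V \<subseteq> closure U \<and>
     (\<forall>x\<in>U. \<forall>y\<in>U. closed_segment x y \<subseteq> closure (closed_segment x y \<inter> U))"

end

(* The epigraph of fbar f U is the closure of epi f_U, so fbar f U is lower semicontinuous, and
   fbar f U x < r means that every neighbourhood of x contains points of U where f < r. Directing
   these points by (neighbourhood, level) yields a net in U along which f, and hence fbar f U,
   tends to fbar f U x from above; lower semicontinuity of f along this net gives f \<le> fbar f U,
   while fbar f U \<le> f on U is immediate. For (c), the convexity inequality on the dense part of a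
   segment of U lifts segments of epi f_U into its closure, and closure preserves convexity in a
   topological vector space. *)

theory Submission
  imports Defs
begin

lemma lctvs_tendsto_add:
  fixes g h :: "'b \<Rightarrow> 'a::{real_vector,t2_space}"
  assumes "lctvs TYPE('a)" and "(g \<longlongrightarrow> a) F" "(h \<longlongrightarrow> b) F"
  shows "((\<lambda>x. g x + h x) \<longlongrightarrow> a + b) F"
proof -
  have "isCont (\<lambda>(x::'a, y). x + y) (a, b)"
    using assms(1) continuous_on_eq_continuous_at[OF open_UNIV] unfolding lctvs_def by blast
  from isCont_tendsto_compose[OF this tendsto_Pair[OF assms(2,3)]] show ?thesis by simp
qed

lemma lctvs_tendsto_scaleR:
  fixes g :: "'b \<Rightarrow> 'a::{real_vector,t2_space}"
  assumes "lctvs TYPE('a)" and "(c \<longlongrightarrow> c0) F" "(g \<longlongrightarrow> a) F"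
  shows "((\<lambda>x. c x *\<^sub>R g x) \<longlongrightarrow> c0 *\<^sub>R a) F"
proof -
  have "isCont (\<lambda>(c::real, x::'a). c *\<^sub>R x) (c0, a)"
    using assms(1) continuous_on_eq_continuous_at[OF open_UNIV] unfolding lctvs_def by blast
  from isCont_tendsto_compose[OF this tendsto_Pair[OF assms(2,3)]] show ?thesis by simp
qed

lemma lctvs_tendsto_combination:
  fixes p q :: "'b \<Rightarrow> 'a::{real_vector,t2_space}"
  assumes "lctvs TYPE('a)" and "(s \<longlongrightarrow> s0) F" "(p \<longlongrightarrow> p0) F" "(q \<longlongrightarrow> q0) F"
  shows "((\<lambda>x. (1 - s x) *\<^sub>R p x + s x *\<^sub>R q x) \<longlongrightarrow> (1 - s0) *\<^sub>R p0 + s0 *\<^sub>R q0) F"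
  by (intro lctvs_tendsto_add lctvs_tendsto_scaleR tendsto_diff tendsto_const assms)

lemma lctvs_tendsto_combination_prod:
  fixes p q :: "'b \<Rightarrow> 'a::{real_vector,t2_space} \<times> real"
  assumes X: "lctvs TYPE('a)" and "(s \<longlongrightarrow> s0) F" "(p \<longlongrightarrow> p0) F" "(q \<longlongrightarrow> q0) F"
  shows "((\<lambda>x. (1 - s x) *\<^sub>R p x + s x *\<^sub>R q x) \<longlongrightarrow> (1 - s0) *\<^sub>R p0 + s0 *\<^sub>R q0) F"
proof -
  have "((\<lambda>x. ((1 - s x) *\<^sub>R fst (p x) + s x *\<^sub>R fst (q x), (1 - s x) * snd (p x) + s x * snd (q x)))
        \<longlongrightarrow> ((1 - s0) *\<^sub>R fst p0 + s0 *\<^sub>R fst q0, (1 - s0) * snd p0 + s0 * snd q0)) F"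
    by (intro tendsto_Pair lctvs_tendsto_combination[OF X] tendsto_add tendsto_mult tendsto_diff
        tendsto_const tendsto_fst tendsto_snd assms(2-4))
  then show ?thesis by (simp add: scaleR_prod_def plus_prod_def)
qed

lemma lctvs_continuous_on_segment_param:
  fixes u v :: "'a::{real_vector,t2_space}"
  assumes "lctvs TYPE('a)"
  shows "continuous_on S (\<lambda>s::real. (1 - s) *\<^sub>R u + s *\<^sub>R v)"
  unfolding continuous_on_def
  by (intro ballI lctvs_tendsto_combination[OF assms] tendsto_const tendsto_ident_at)

lemma lctvs_continuous_on_segment_param_prod:
  fixes p q :: "'a::{real_vector,t2_space} \<times> real"
  assumes "lctvs TYPE('a)"
  shows "continuous_on S (\<lambda>s::real. (1 - s) *\<^sub>R p + s *\<^sub>R q)"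
  unfolding continuous_on_def
  by (intro ballI lctvs_tendsto_combination_prod[OF assms] tendsto_const tendsto_ident_at)

lemma lctvs_continuous_on_combination_prod:
  assumes "lctvs TYPE('a::{real_vector,t2_space})"
  shows "continuous_on S (\<lambda>(p::'a \<times> real, q). (1 - t) *\<^sub>R p + t *\<^sub>R q)"
  unfolding continuous_on_def split_beta
  by (intro ballI lctvs_tendsto_combination_prod[OF assms] tendsto_const tendsto_fst tendsto_snd
      tendsto_ident_at)

text \<open>The segment parametrisation is a continuous injection of the compact interval into a
  Hausdorff space, so density of U in the segment pulls back to the parameters.\<close>
lemma segment_params_dense:
  fixes u v :: "'a::{real_vector,t2_space}"
  assumes X: "lctvs TYPE('a)" and "u \<in> U"
    and seg: "closed_segment u v \<subseteq> closure (closed_segment u v \<inter> U)"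
    and t: "0 \<le> t" "t \<le> 1"
  shows "t \<in> closure {s\<in>{0..1}. (1 - s) *\<^sub>R u + s *\<^sub>R v \<in> U}"
proof (cases "u = v")
  case True
  then have "{s\<in>{0..1}. (1 - s) *\<^sub>R u + s *\<^sub>R v \<in> U} = {0..1}"
    using \<open>u \<in> U\<close> by (auto simp: algebra_simps)
  then show ?thesis using t closure_subset by fastforce
next
  case False
  define g where "g = (\<lambda>s::real. (1 - s) *\<^sub>R u + s *\<^sub>R v)"
  define T where "T = {s\<in>{0..1}. g s \<in> U}"
  have "compact (closure T)"
    by (rule compact_closure[THEN iffD2], rule bounded_subset[of "{0..1}"]) (auto simp: T_def)
  then have "closed (g ` closure T)"
    unfolding g_def
    by (intro compact_imp_closed compact_continuous_image lctvs_continuous_on_segment_param[OF X])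
  moreover have "closed_segment u v \<inter> U \<subseteq> g ` closure T"
    using closure_subset unfolding closed_segment_def T_def g_def by fastforce
  ultimately have "closure (closed_segment u v \<inter> U) \<subseteq> g ` closure T"
    by (rule closure_minimal[rotated])
  moreover have "g t \<in> closed_segment u v" using t unfolding closed_segment_def g_def by auto
  ultimately obtain s where "s \<in> closure T" "g s = g t" using seg by (metis imageE subsetD)
  then have "(s - t) *\<^sub>R (v - u) = 0" unfolding g_def by (simp add: algebra_simps)
  with \<open>s \<in> closure T\<close> False show ?thesis unfolding T_def g_def by auto
qed

lemma closed_mem_Pair_if_above:
  assumes "closed C" "\<And>r'. r < r' \<Longrightarrow> (x, r') \<in> C"
  shows "(x, r::real) \<in> C"
proof (rule Lim_in_closed_set[of C "\<lambda>r'. (x, r')" "at_right r"])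
  show "\<forall>\<^sub>F r' in at_right r. (x, r') \<in> C"
    using assms(2) eventually_at_right_less[of r] by (auto elim: eventually_mono)
  show "((\<lambda>r'. (x, r')) \<longlongrightarrow> (x, r)) (at_right r)"
    by (intro tendsto_Pair tendsto_const) (simp add: tendsto_ident_at)
qed (use assms(1) in auto)

lemma closure_epi_on_upward:
  fixes f :: "'a::topological_space \<Rightarrow> ereal"
  assumes "(x, a) \<in> closure (epi_on f U)" "a \<le> b"
  shows "(x, b) \<in> closure (epi_on f U)"
proof -
  define shift where "shift = (\<lambda>p::'a \<times> real. (fst p, snd p + (b - a)))"
  have "shift ` epi_on f U \<subseteq> epi_on f U"
    using assms(2) unfolding shift_def epi_on_def by (auto intro: order_trans)
  then have "shift ` closure (epi_on f U) \<subseteq> closure (epi_on f U)"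
    using closure_subset unfolding shift_def
    by (intro image_closure_subset continuous_intros) auto
  then show ?thesis using assms(1) unfolding shift_def by force
qed

lemma fbar_le_iff: "fbar f U x \<le> ereal r \<longleftrightarrow> (x, r) \<in> closure (epi_on f U)"
proof
  assume le: "fbar f U x \<le> ereal r"
  show "(x, r) \<in> closure (epi_on f U)"
  proof (rule closed_mem_Pair_if_above)
    fix r' assume "r < r'"
    with le have "fbar f U x < ereal r'" by (simp add: le_less_trans)
    then obtain r0 where "r0 < r'" "(x, r0) \<in> closure (epi_on f U)"
      unfolding fbar_def Inf_less_iff by auto
    then show "(x, r') \<in> closure (epi_on f U)" by (auto intro: closure_epi_on_upward)
  qed simp
qed (auto simp: fbar_def intro: Inf_lower)

lemma epi_fbar: "epi (fbar f U) = closure (epi_on f U)"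
  by (auto simp: epi_def fbar_le_iff)

lemma fbar_le_on: "u \<in> U \<Longrightarrow> fbar f U u \<le> f u"
  by (rule ereal_le_real) (auto simp: fbar_le_iff epi_on_def intro: closure_subset[THEN subsetD])

lemma exists_near_below_fbar:
  fixes f :: "'a::topological_space \<Rightarrow> ereal"
  assumes "open N" "x \<in> N" "fbar f U x < ereal r"
  shows "\<exists>u\<in>U \<inter> N. f u < ereal r"
proof -
  obtain r0 where r0: "fbar f U x < ereal r0" "r0 < r" using ereal_dense2[OF assms(3)] by auto
  then have "(x, r0) \<in> closure (epi_on f U)" by (simp add: fbar_le_iff[symmetric])
  moreover have "open (N \<times> {..<r})" "(x, r0) \<in> N \<times> {..<r}"
    using assms(1,2) r0(2) by (auto intro: open_Times)
  ultimately have "N \<times> {..<r} \<inter> epi_on f U \<noteq> {}"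
    using open_Int_closure_eq_empty by blast
  then obtain u p where "u \<in> N" "p < r" "u \<in> U" "f u \<le> ereal p"
    unfolding epi_on_def by auto
  then show ?thesis using le_less_trans[of "f u" "ereal p" "ereal r"] by auto
qed

lemma lsc_on_UNIV_if_closed_epi:
  fixes g :: "'a::topological_space \<Rightarrow> ereal"
  assumes "closed (epi g)"
  shows "lsc_on UNIV g"
  unfolding lsc_on_def lsc_at_within_def le_Liminf_iff
proof (intro ballI allI impI, rule ccontr)
  fix x F and y :: ereal
  assume F: "F \<noteq> bot \<and> F \<le> nhds x \<and> eventually (\<lambda>z. z \<in> UNIV) F"
    and "y < g x" and not_ev: "\<not> eventually (\<lambda>z. y < g z) F"
  obtain r where r: "y < ereal r" "ereal r < g x" using ereal_dense2[OF \<open>y < g x\<close>] by blast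
  define F' where "F' = inf F (principal {z. g z < ereal r})"
  have "F' \<noteq> bot"
  proof
    assume "F' = bot"
    then have "eventually (\<lambda>z. ereal r \<le> g z) F"
      unfolding F'_def trivial_limit_def eventually_inf_principal by (simp add: not_less)
    then have "eventually (\<lambda>z. y < g z) F" by (rule eventually_mono) (use r(1) in auto)
    with not_ev show False ..
  qed
  moreover have "\<forall>\<^sub>F z in F'. (z, r) \<in> epi g"
    unfolding F'_def eventually_inf_principal epi_def by (auto intro: always_eventually)
  moreover have "((\<lambda>z. (z, r)) \<longlongrightarrow> (x, r)) F'"
    using F unfolding F'_def
    by (intro tendsto_Pair tendsto_const) (simp add: filterlim_def le_infI1)
  ultimately have "(x, r) \<in> epi g" using assms by (intro Lim_in_closed_set) auto
  with r(2) show False by (simp add: epi_def)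
qed

lemma lsc_fbar: "lsc_on UNIV (fbar f U)"
  by (rule lsc_on_UNIV_if_closed_epi) (simp add: epi_fbar)

text \<open>G is generated by the sets of points of U near x where f lies below a level above fbar x.\<close>
lemma fbar_approximating_filter:
  fixes f :: "'a::topological_space \<Rightarrow> ereal"
  assumes "fbar f U x < \<infinity>"
  obtains G where "G \<noteq> bot" "G \<le> nhds x" "eventually (\<lambda>y. y \<in> U) G" "Limsup G f \<le> fbar f U x"
proof
  define B where "B = {(N, r). open N \<and> x \<in> N \<and> fbar f U x < ereal r}"
  define P where "P = (\<lambda>(N, r). principal {u \<in> U \<inter> N. f u < ereal r})"
  define G where "G = (INF b\<in>B. P b)"
  obtain r1 where r1: "fbar f U x < ereal r1" using assms ereal_dense2 by (metis less_ereal.simps(4))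
  have ev: "eventually Q G \<longleftrightarrow> (\<exists>b\<in>B. eventually Q (P b))" for Q
    unfolding G_def
  proof (rule eventually_INF_base)
    show "B \<noteq> {}" using r1 unfolding B_def by auto
    fix a b assume "a \<in> B" "b \<in> B"
    then obtain N1 r1 N2 r2 where "a = (N1, r1)" "b = (N2, r2)" "open N1" "open N2" "x \<in> N1" "x \<in> N2"
      "fbar f U x < ereal r1" "fbar f U x < ereal r2" unfolding B_def by auto
    then show "\<exists>c\<in>B. P c \<le> inf (P a) (P b)"
      by (intro bexI[of _ "(N1 \<inter> N2, min r1 r2)"])
        (auto simp: B_def P_def min_le_iff_disj intro: less_le_trans[of _ "ereal (min r1 r2)"])
  qed
  show "G \<noteq> bot"
    unfolding trivial_limit_def ev using exists_near_below_fbar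
    by (fastforce simp: B_def P_def eventually_principal)
  show "G \<le> nhds x" unfolding le_nhds ev using r1
    by (intro allI impI bexI[of _ "(_, r1)"]) (auto simp: B_def P_def eventually_principal)
  show "eventually (\<lambda>y. y \<in> U) G" unfolding ev using r1
    by (intro bexI[of _ "(UNIV, r1)"]) (auto simp: B_def P_def eventually_principal)
  show "Limsup G f \<le> fbar f U x" unfolding Limsup_le_iff
  proof (intro allI impI)
    fix y assume "fbar f U x < y"
    then obtain r where "fbar f U x < ereal r" "ereal r < y" using ereal_dense2 by blast
    then show "eventually (\<lambda>z. f z < y) G" unfolding ev
      by (intro bexI[of _ "(UNIV, r)"]) (auto simp: B_def P_def eventually_principal)
  qed
qed

lemma le_fbar_if_lsc_at_within:
  fixes f :: "'a::topological_space \<Rightarrow> ereal"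
  assumes "lsc_at_within f S x" "U \<subseteq> S"
  shows "f x \<le> fbar f U x"
proof (cases "fbar f U x < \<infinity>")
  case True
  then obtain G where G: "G \<noteq> bot" "G \<le> nhds x" "eventually (\<lambda>y. y \<in> U) G" "Limsup G f \<le> fbar f U x"
    by (rule fbar_approximating_filter)
  have "eventually (\<lambda>y. y \<in> S) G" using G(3) assms(2) by (auto elim: eventually_mono)
  with assms(1) G(1,2) have "f x \<le> Liminf G f" unfolding lsc_at_within_def by blast
  also have "\<dots> \<le> Limsup G f" using G(1) by (rule Liminf_le_Limsup)
  finally show ?thesis using G(4) by simp
qed simp

lemma graph_dense_fbar:
  fixes f :: "'a::topological_space \<Rightarrow> ereal"
  assumes "U \<subseteq> edom f"
  shows "graph_dense (fbar f U) U"
  unfolding graph_dense_def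
proof (intro conjI ballI)
  show "U \<subseteq> edom (fbar f U)"
  proof
    fix u assume "u \<in> U"
    then have "fbar f U u \<le> f u" "f u < \<infinity>" using assms fbar_le_on by (auto simp: edom_def)
    then have "fbar f U u < \<infinity>" by (rule le_less_trans)
    then show "u \<in> edom (fbar f U)" by (simp add: edom_def)
  qed
  fix x assume "x \<in> edom (fbar f U)"
  then have "fbar f U x < \<infinity>" by (simp add: edom_def)
  then obtain G where G: "G \<noteq> bot" "G \<le> nhds x" "eventually (\<lambda>y. y \<in> U) G" "Limsup G f \<le> fbar f U x"
    by (rule fbar_approximating_filter)
  have "Limsup G (fbar f U) \<le> Limsup G f"
    by (intro Limsup_mono eventually_mono[OF G(3)]) (rule fbar_le_on)
  with G(4) have sup: "Limsup G (fbar f U) \<le> fbar f U x" by simp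
  have inf: "fbar f U x \<le> Liminf G (fbar f U)"
  proof -
    have "lsc_at_within (fbar f U) UNIV x" using lsc_fbar[of f U] by (simp add: lsc_on_def)
    with G(1,2) show ?thesis unfolding lsc_at_within_def by simp
  qed
  have "Liminf G (fbar f U) \<le> Limsup G (fbar f U)" using G(1) by (rule Liminf_le_Limsup)
  with sup inf have "(fbar f U \<longlongrightarrow> fbar f U x) G"
    by (intro Liminf_eq_Limsup G(1)) simp_all
  with G(1-3) show "\<exists>F. F \<noteq> bot \<and> F \<le> nhds x \<and> eventually (\<lambda>y. y \<in> U) F \<and> (fbar f U \<longlongrightarrow> fbar f U x) F"
    by blast
qed

lemma INF_fbar: "(INF x\<in>U. f x) = (INF x. fbar f U x)"
proof (rule antisym)
  show "(INF x\<in>U. f x) \<le> (INF x. fbar f U x)"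
  proof (rule INF_greatest)
    fix x
    show "(INF x\<in>U. f x) \<le> fbar f U x"
    proof (cases "fbar f U x < \<infinity>")
      case True
      then obtain G where G: "G \<noteq> bot" "G \<le> nhds x" "eventually (\<lambda>y. y \<in> U) G" "Limsup G f \<le> fbar f U x"
        by (rule fbar_approximating_filter)
      have "(INF x\<in>U. f x) \<le> Liminf G f"
        by (intro Liminf_bounded eventually_mono[OF G(3)]) (rule INF_lower)
      also have "\<dots> \<le> Limsup G f" using G(1) by (rule Liminf_le_Limsup)
      finally show ?thesis using G(4) by simp
    qed simp
  qed
  show "(INF x. fbar f U x) \<le> (INF x\<in>U. f x)"
    by (rule INF_greatest) (auto intro: INF_lower2 fbar_le_on)
qed

lemma fbar_le_if_tendsto:
  assumes "F \<noteq> bot" "F \<le> nhds x" "eventually (\<lambda>y. y \<in> U) F" "(f \<longlongrightarrow> f x) F"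
  shows "fbar f U x \<le> f x"
proof (rule ereal_le_real)
  fix z assume "f x \<le> ereal z"
  have "(x, z) \<in> closure (epi_on f U)"
  proof (rule closed_mem_Pair_if_above)
    fix r assume "z < r"
    with \<open>f x \<le> ereal z\<close> have "eventually (\<lambda>y. f y < ereal r) F"
      using assms(4) unfolding order_tendsto_iff by (simp add: le_less_trans)
    with assms(3) have "\<forall>\<^sub>F y in F. (y, r) \<in> closure (epi_on f U)"
      by eventually_elim (auto simp: epi_on_def intro: closure_subset[THEN subsetD])
    moreover have "((\<lambda>y. (y, r)) \<longlongrightarrow> (x, r)) F"
      using assms(2) by (intro tendsto_Pair tendsto_const) (simp add: filterlim_def)
    ultimately show "(x, r) \<in> closure (epi_on f U)" using assms(1) by (intro Lim_in_closed_set) auto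
  qed simp
  then show "fbar f U x \<le> ereal z" by (simp add: fbar_le_iff)
qed

lemma fbar_eq_iff_graph_dense:
  fixes f :: "'a::topological_space \<Rightarrow> ereal"
  assumes "U \<subseteq> edom f" "lsc_on UNIV f"
  shows "fbar f U = f \<longleftrightarrow> graph_dense f U"
proof
  assume "fbar f U = f"
  with graph_dense_fbar[OF assms(1)] show "graph_dense f U" by simp
next
  assume dense: "graph_dense f U"
  show "fbar f U = f"
  proof
    fix x
    have "fbar f U x \<le> f x"
    proof (cases "x \<in> edom f")
      case True
      with dense obtain F where "F \<noteq> bot" "F \<le> nhds x" "eventually (\<lambda>y. y \<in> U) F" "(f \<longlongrightarrow> f x) F"
        unfolding graph_dense_def by blast
      then show ?thesis by (rule fbar_le_if_tendsto)
    qed (simp add: edom_def)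
    moreover have "f x \<le> fbar f U x"
      using assms(2) by (intro le_fbar_if_lsc_at_within[of f UNIV]) (auto simp: lsc_on_def)
    ultimately show "fbar f U x = f x" by simp
  qed
qed

lemma escale_mono: "0 \<le> t \<Longrightarrow> a \<le> b \<Longrightarrow> escale t a \<le> escale t b"
  by (auto simp: escale_def top_unique intro: ereal_mult_left_mono)

lemma escale_ereal [simp]: "escale t (ereal x) = ereal (t * x)"
  by (simp add: escale_def)

lemma closed_segment_subset_closure_epi_on:
  fixes f :: "'a::{real_vector,t2_space} \<Rightarrow> ereal"
  assumes X: "lctvs TYPE('a)" and conv: "convex_on_set U f"
    and segU: "\<forall>x\<in>U. \<forall>y\<in>U. closed_segment x y \<subseteq> closure (closed_segment x y \<inter> U)"
    and "p \<in> epi_on f U" "q \<in> epi_on f U"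
  shows "closed_segment p q \<subseteq> closure (closed_segment p q \<inter> epi_on f U)"
proof
  obtain u a v b where p: "p = (u, a)" "u \<in> U" "f u \<le> ereal a"
    and q: "q = (v, b)" "v \<in> U" "f v \<le> ereal b"
    using assms(4,5) unfolding epi_on_def by auto
  define H where "H = (\<lambda>s::real. (1 - s) *\<^sub>R p + s *\<^sub>R q)"
  define T where "T = {s\<in>{0..1}. (1 - s) *\<^sub>R u + s *\<^sub>R v \<in> U}"
  have "H ` T \<subseteq> closed_segment p q \<inter> epi_on f U"
  proof
    fix y assume "y \<in> H ` T"
    then obtain s where s: "0 \<le> s" "s \<le> 1" "(1 - s) *\<^sub>R u + s *\<^sub>R v \<in> U" "y = H s"
      unfolding T_def by auto
    have "f ((1 - s) *\<^sub>R u + s *\<^sub>R v) \<le> escale (1 - s) (f u) + escale s (f v)"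
      using conv p(2) q(2) s(1-3) unfolding convex_on_set_def by blast
    also have "\<dots> \<le> escale (1 - s) (ereal a) + escale s (ereal b)"
      using p(3) q(3) s(1,2) by (intro add_mono escale_mono) auto
    finally have "y \<in> epi_on f U" using s(3,4) p(1) q(1) unfolding H_def epi_on_def by simp
    moreover have "y \<in> closed_segment p q" using s(1,2,4) unfolding closed_segment_def H_def by auto
    ultimately show "y \<in> closed_segment p q \<inter> epi_on f U" by blast
  qed
  then have "H ` T \<subseteq> closure (closed_segment p q \<inter> epi_on f U)" using closure_subset by blast
  then have "H ` closure T \<subseteq> closure (closed_segment p q \<inter> epi_on f U)"
    unfolding H_def by (intro image_closure_subset lctvs_continuous_on_segment_param_prod[OF X]) auto
  moreover fix z assume "z \<in> closed_segment p q"
  then obtain t where t: "0 \<le> t" "t \<le> 1" "z = H t" unfolding closed_segment_def H_def by auto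
  moreover have "t \<in> closure T"
    unfolding T_def using segU p(2) q(2) by (intro segment_params_dense[OF X _ _ t(1,2)]) auto
  ultimately show "z \<in> closure (closed_segment p q \<inter> epi_on f U)" by auto
qed

lemma convex_closure_epi_on:
  fixes f :: "'a::{real_vector,t2_space} \<Rightarrow> ereal"
  assumes X: "lctvs TYPE('a)" and conv: "convex_on_set U f"
    and segU: "\<forall>x\<in>U. \<forall>y\<in>U. closed_segment x y \<subseteq> closure (closed_segment x y \<inter> U)"
  shows "convex (closure (epi_on f U))"
  unfolding convex_alt
proof (intro ballI allI impI)
  fix x y and t :: real
  assume xy: "x \<in> closure (epi_on f U)" "y \<in> closure (epi_on f U)" and t: "0 \<le> t \<and> t \<le> 1"
  define comb where "comb = (\<lambda>(p::'a \<times> real, q). (1 - t) *\<^sub>R p + t *\<^sub>R q)"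
  have "comb ` (epi_on f U \<times> epi_on f U) \<subseteq> closure (epi_on f U)"
  proof
    fix w assume "w \<in> comb ` (epi_on f U \<times> epi_on f U)"
    then obtain p q where pq: "p \<in> epi_on f U" "q \<in> epi_on f U" "w = (1 - t) *\<^sub>R p + t *\<^sub>R q"
      unfolding comb_def by auto
    have "w \<in> closed_segment p q" using pq(3) t unfolding closed_segment_def by auto
    with closed_segment_subset_closure_epi_on[OF X conv segU pq(1,2)]
    show "w \<in> closure (epi_on f U)" by (meson closure_mono inf_le2 subsetD)
  qed
  then have "comb ` closure (epi_on f U \<times> epi_on f U) \<subseteq> closure (epi_on f U)"
    unfolding comb_def by (intro image_closure_subset lctvs_continuous_on_combination_prod[OF X]) auto
  moreover have "(x, y) \<in> closure (epi_on f U \<times> epi_on f U)" using xy by (simp add: closure_Times)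
  ultimately show "(1 - t) *\<^sub>R x + t *\<^sub>R y \<in> closure (epi_on f U)" unfolding comb_def by auto
qed

lemma self_segment_dense_epi_on:
  fixes f :: "'a::{real_vector,t2_space} \<Rightarrow> ereal"
  assumes X: "lctvs TYPE('a)" and conv: "convex_on_set U f"
    and segU: "\<forall>x\<in>U. \<forall>y\<in>U. closed_segment x y \<subseteq> closure (closed_segment x y \<inter> U)"
  shows "self_segment_dense (epi_on f U) (epi (fbar f U))"
  unfolding self_segment_dense_def epi_fbar
  using convex_closure_epi_on[OF assms] closed_segment_subset_closure_epi_on[OF assms]
  by (simp add: closure_subset)

lemma ereal_le_weighted_sum_if_real_bounds:
  fixes a b c :: ereal
  assumes "0 < l" "0 < m" "a < \<infinity>" "b < \<infinity>"
    and bound: "\<And>r s. a \<le> ereal r \<Longrightarrow> b \<le> ereal s \<Longrightarrow> c \<le> ereal (l * r + m * s)"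
  shows "c \<le> ereal l * a + ereal m * b"
proof (rule ereal_le_real)
  fix z assume z: "ereal l * a + ereal m * b \<le> ereal z"
  obtain r0 s0 where r0: "a \<le> ereal r0" and s0: "b \<le> ereal s0"
    using assms(3,4) by (cases a; cases b) auto
  show "c \<le> ereal z"
  proof (cases "a = -\<infinity>")
    case True
    then show ?thesis using bound[OF _ s0, of "(z - m * s0) / l"] assms(1) by simp
  next
    case a: False
    show ?thesis
    proof (cases "b = -\<infinity>")
      case True
      then show ?thesis using bound[OF r0, of "(z - l * r0) / m"] assms(2) by simp
    next
      case False
      with a assms(3,4) obtain a' b' where "a = ereal a'" "b = ereal b'" by (cases a; cases b) auto
      then have "c \<le> ereal (l * a' + m * b')" "l * a' + m * b' \<le> z" using bound[of a' b'] z by simp_all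
      then show ?thesis by (meson ereal_less_eq(3) order_trans)
    qed
  qed
qed

lemma convex_on_set_UNIV_if_convex_epi:
  fixes g :: "'a::real_vector \<Rightarrow> ereal"
  assumes "convex (epi g)"
  shows "convex_on_set UNIV g"
  unfolding convex_on_set_def
proof (intro ballI allI impI)
  fix u v :: 'a and t :: real
  assume "0 \<le> t \<and> t \<le> 1 \<and> (1 - t) *\<^sub>R u + t *\<^sub>R v \<in> UNIV"
  then have t: "0 \<le> t" "t \<le> 1" by auto
  define w where "w = (1 - t) *\<^sub>R u + t *\<^sub>R v"
  have bound: "g w \<le> ereal ((1 - t) * r + t * s)" if "g u \<le> ereal r" "g v \<le> ereal s" for r s
  proof -
    have "(1 - t) *\<^sub>R (u, r) + t *\<^sub>R (v, s) \<in> epi g"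
      using that t by (intro convexD[OF assms]) (auto simp: epi_def)
    then show ?thesis unfolding epi_def w_def by simp
  qed
  consider "t = 0" | "t = 1" | "0 < t" "t < 1" "g u = \<infinity> \<or> g v = \<infinity>"
    | "0 < t" "t < 1" "g u < \<infinity>" "g v < \<infinity>"
    using t by (force simp: less_top)
  then show "g w \<le> escale (1 - t) (g u) + escale t (g v)"
  proof cases
    case 4
    then have "escale (1 - t) (g u) + escale t (g v) = ereal (1 - t) * g u + ereal t * g v"
      by (simp add: escale_def)
    with 4 show ?thesis by (simp add: ereal_le_weighted_sum_if_real_bounds bound)
  qed (auto simp: w_def escale_def)
qed

theorem mainTheorem4:
  fixes f :: "'a::{real_vector,t2_space} \<Rightarrow> ereal" and U :: "'a set"
  assumes X: "lctvs TYPE('a)"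
    and proper: "proper f"
    and U_sub: "U \<subseteq> edom f"
    and U_dense: "edom f \<subseteq> closure U"
  shows "(lsc_on UNIV (fbar f U)
          \<and> graph_dense (fbar f U) U
          \<and> (INF x\<in>U. f x) = (INF x. fbar f U x))
       \<and> (lsc_on U f \<longrightarrow> (\<forall>u\<in>U. f u = fbar f U u))
       \<and> (lsc_on U f \<and> lsc_on UNIV f \<longrightarrow>
           edom (fbar f U) \<subseteq> edom f \<and> (\<forall>x. f x \<le> fbar f U x)
           \<and> (fbar f U = f \<longleftrightarrow> graph_dense f U))
       \<and> (convex (edom f) \<and> self_segment_dense U (edom f) \<and> convex_on_set U f \<longrightarrow>
           convex_on_set UNIV (fbar f U) \<and> self_segment_dense (epi_on f U) (epi (fbar f U)))"
proof (intro conjI impI)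
  show "lsc_on UNIV (fbar f U)" "(INF x\<in>U. f x) = (INF x. fbar f U x)"
    by (rule lsc_fbar, rule INF_fbar)
  show "graph_dense (fbar f U) U" using U_sub by (rule graph_dense_fbar)
  show "\<forall>u\<in>U. f u = fbar f U u" if lsc: "lsc_on U f"
  proof
    fix u assume "u \<in> U"
    with lsc have "f u \<le> fbar f U u" by (intro le_fbar_if_lsc_at_within[of f U]) (auto simp: lsc_on_def)
    then show "f u = fbar f U u" using fbar_le_on[OF \<open>u \<in> U\<close>] by (rule antisym)
  qed
  assume "lsc_on U f \<and> lsc_on UNIV f"
  then have lsc: "lsc_on UNIV f" ..
  show le: "\<forall>x. f x \<le> fbar f U x"
    using lsc le_fbar_if_lsc_at_within[of f UNIV] by (simp add: lsc_on_def)
  then show "edom (fbar f U) \<subseteq> edom f" by (metis edom_def le_less_trans mem_Collect_eq subsetI)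
  show "fbar f U = f \<longleftrightarrow> graph_dense f U" using U_sub lsc by (rule fbar_eq_iff_graph_dense)
next
  assume "convex (edom f) \<and> self_segment_dense U (edom f) \<and> convex_on_set U f"
  then have conv: "convex_on_set U f"
    and segU: "\<forall>x\<in>U. \<forall>y\<in>U. closed_segment x y \<subseteq> closure (closed_segment x y \<inter> U)"
    by (auto simp: self_segment_dense_def)
  show "convex_on_set UNIV (fbar f U)"
    using convex_closure_epi_on[OF X conv segU] by (intro convex_on_set_UNIV_if_convex_epi) (simp add: epi_fbar)
  show "self_segment_dense (epi_on f U) (epi (fbar f U))"
    using X conv segU by (rule self_segment_dense_epi_on)
qed

end
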